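(* For every \textsc{Set Once Strip Cover} instance $(x,b)$, the \textsc{RoundRobin} algorithm produces a valid schedule with lifetime $\mathrm{RR}(x,b)=\sum_{i=1}^n b_i/r_i$, where $r_i=\max\{x_i,1-x_i\}$, and $\mathrm{RR}(x,b)\ge \frac{2}{3}\,\mathrm{Opt}(x,b)$, where $\mathrm{Opt}(x,b)$ is the optimal lifetime of $(x,b)$. That is, \textsc{RoundRobin} is a $\frac{3}{2}$-approximation algorithm for \textsc{Set Once Strip Cover}.
   Context: \textsc{Set Once Strip Cover}: An instance is a pair $(x,b)$, where $x=(x_1,\ldots,x_n)\in[0,1]^n$ with $x_1\le\cdots\le x_n$ are sensor locations and $b=(b_1,\ldots,b_n)$, $b_i\ge 0$ rational, are battery charges. A schedule is a pair $(\rho,\tau)$ with $\rho\in[0,1]^n$ (radii) and $\tau\in[0,\infty)^n$ (activation times), each set once. Sensor $i$ covers the interval $[x_i-\rho_i,x_i+\rho_i]$ during the time interval $[\tau_i,\tau_i+b_i/\rho_i]$ and nothing otherwise (a sensor with $\rho_i=0$ covers nothing). A point $(u,t)$ is covered if $u\in[x_i-\rho_i,x_i+\rho_i]$ and $t\in[\tau_i,\tau_i+b_i/\rho_i]$ for some $i$. The lifetime of a schedule is the maximum $T$ such that every $(u,t)\in[0,1]\times[0,T]$ is covered; $\mathrm{Opt}(x,b)$ is the maximum lifetime over all schedules. The \textsc{RoundRobin} algorithm sets $\rho_i=r_i=\max\{x_i,1-x_i\}$ and $\tau_i=\sum_{j=1}^{i-1}b_j/\rho_j$ for every $i$, so that the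 sensors take turns each covering all of $[0,1]$. *)

theory Defs
  imports Complex_Main
begin

(* Sensors are indexed 0..n-1 (paper: 1..n). x i = location, b i = battery,
   rho i = radius, tau i = activation time. *)

definition covered ::
  "nat \<Rightarrow> (nat \<Rightarrow> real) \<Rightarrow> (nat \<Rightarrow> real) \<Rightarrow> (nat \<Rightarrow> real) \<Rightarrow> (nat \<Rightarrow> real)
   \<Rightarrow> real \<Rightarrow> real \<Rightarrow> bool" where
  "covered n x b rho tau u t \<longleftrightarrow>
     (\<exists>i<n. rho i > 0 \<and> x i - rho i \<le> u \<and> u \<le> x i + rho i \<and>
            tau i \<le> t \<and> t \<le> tau i + b i / rho i)"

definition covers_until ::
  "nat \<Rightarrow> (nat \<Rightarrow> real) \<Rightarrow> (nat \<Rightarrow> real) \<Rightarrow> (nat \<Rightarrow> real) \<Rightarrow> (nat \<Rightarrow> real)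
   \<Rightarrow> real \<Rightarrow> bool" where
  "covers_until n x b rho tau T \<longleftrightarrow>
     (\<forall>u\<in>{0..1}. \<forall>t\<in>{0..T}. covered n x b rho tau u t)"

(* lifetime: the largest T >= 0 such that the strip [0,1] x [0,T] is covered
   (0 by convention if not even time 0 is fully covered) *)
definition lifetime ::
  "nat \<Rightarrow> (nat \<Rightarrow> real) \<Rightarrow> (nat \<Rightarrow> real) \<Rightarrow> (nat \<Rightarrow> real) \<Rightarrow> (nat \<Rightarrow> real) \<Rightarrow> real" where
  "lifetime n x b rho tau = Sup (insert 0 {T. T \<ge> 0 \<and> covers_until n x b rho tau T})"

definition schedule :: "nat \<Rightarrow> (nat \<Rightarrow> real) \<Rightarrow> (nat \<Rightarrow> real) \<Rightarrow> bool" where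
  "schedule n rho tau \<longleftrightarrow> (\<forall>i<n. 0 \<le> rho i \<and> rho i \<le> 1 \<and> 0 \<le> tau i)"

definition Opt :: "nat \<Rightarrow> (nat \<Rightarrow> real) \<Rightarrow> (nat \<Rightarrow> real) \<Rightarrow> real" where
  "Opt n x b = Sup {lifetime n x b rho tau | rho tau. schedule n rho tau}"

definition strip_instance :: "nat \<Rightarrow> (nat \<Rightarrow> real) \<Rightarrow> (nat \<Rightarrow> real) \<Rightarrow> bool" where
  "strip_instance n x b \<longleftrightarrow>
     (\<forall>i<n. 0 \<le> x i \<and> x i \<le> 1 \<and> 0 \<le> b i \<and> b i \<in> \<rat>) \<and>
     (\<forall>i j. i \<le> j \<and> j < n \<longrightarrow> x i \<le> x j)"

definition rr_radius :: "(nat \<Rightarrow> real) \<Rightarrow> nat \<Rightarrow> real" where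
  "rr_radius x i = max (x i) (1 - x i)"

definition rr_time :: "(nat \<Rightarrow> real) \<Rightarrow> (nat \<Rightarrow> real) \<Rightarrow> nat \<Rightarrow> real" where
  "rr_time x b i = (\<Sum>j<i. b j / rr_radius x j)"

definition RR :: "nat \<Rightarrow> (nat \<Rightarrow> real) \<Rightarrow> (nat \<Rightarrow> real) \<Rightarrow> real" where
  "RR n x b = (\<Sum>i<n. b i / rr_radius x i)"

end

theory Submission
  imports Defs "HOL-Analysis.Analysis"
begin

text \<open>Round robin runs the sensors one after another, each at radius
  \<open>r\<^sub>i = max x\<^sub>i (1 - x\<^sub>i)\<close>, which alone covers \<open>[0,1]\<close>, for time \<open>b\<^sub>i / r\<^sub>i\<close>;
  so its lifetime is exactly \<open>\<Sum> b\<^sub>i / r\<^sub>i\<close>.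

  For the bound on the optimum, weigh \<open>[0,1]\<close> by the potential \<open>\<Phi>\<close> with
  \<open>\<Phi> p = p / (2 - p)\<close> on \<open>[0, 1/2]\<close> and \<open>\<Phi> (1 - p) = 2/3 - \<Phi> p\<close>. A sensor at \<open>x\<close> of
  radius \<open>\<rho>\<close> raises \<open>\<Phi>\<close> across its interval by at most \<open>\<rho> / r\<close>, so at every moment at
  which the active sensors cover \<open>[0,1]\<close> their weights \<open>\<rho>\<^sub>i / r\<^sub>i\<close> add up to at least
  \<open>\<Phi> 1 = 2/3\<close>. Sensor \<open>i\<close> is active for time \<open>b\<^sub>i / \<rho>\<^sub>i\<close>, so integrating over \<open>[0, T]\<close>
  gives \<open>2/3 \<cdot> T \<le> \<Sum> b\<^sub>i / r\<^sub>i\<close>.\<close>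

definition potential :: "real \<Rightarrow> real" where
  "potential p = (if p \<le> 1/2 then p / (2 - p) else 2/3 - (1 - p) / (1 + p))"

lemma potential_0 [simp]: "potential 0 = 0"
  and potential_1 [simp]: "potential 1 = 2/3"
  by (simp_all add: potential_def)

lemma potential_bounds:
  assumes "0 \<le> p" "p \<le> 1"
  shows "0 \<le> potential p" "potential p \<le> 2/3"
  using assms by (auto simp: potential_def divide_simps)

lemma potential_mono:
  assumes "0 \<le> p" "p \<le> q" "q \<le> 1"
  shows "potential p \<le> potential q"
proof -
  consider "q \<le> 1/2" | "p \<le> 1/2" "1/2 < q" | "1/2 < p" by linarith
  then show ?thesis
  proof cases
    case 1
    have "p * (2 - q) \<le> q * (2 - p)" using assms by (simp add: algebra_simps)
    then show ?thesis using assms 1 by (simp add: potential_def divide_simps)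
  next
    case 2
    then have "potential p \<le> 1/3" "1/3 \<le> potential q"
      using assms by (auto simp: potential_def divide_simps)
    then show ?thesis by linarith
  next
    case 3
    have "(1 - q) * (1 + p) \<le> (1 - p) * (1 + q)" using assms by (simp add: algebra_simps)
    then show ?thesis using assms 3
      by (simp add: potential_def divide_simps) (simp add: algebra_simps)
  qed
qed

lemma potential_reflect:
  assumes "0 \<le> p" "p \<le> 1"
  shows "potential (1 - p) = 2/3 - potential p"
proof -
  consider "p < 1/2" | "p = 1/2" | "1/2 < p" by linarith
  then show ?thesis
  proof cases
    case 2
    show ?thesis unfolding 2 by (simp add: potential_def)
  qed (use assms in \<open>auto simp: potential_def\<close>)
qed

lemma potential_increment_le:
  assumes "0 \<le> l" "l \<le> h" "l + h \<le> 1"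
  shows "potential h - potential l \<le> (h - l) / (2 - h - l)"
proof (cases "h \<le> 1/2")
  case True
  have "2 * (2 - h - l) \<le> (2 - h) * (2 - l)" using assms by (simp add: algebra_simps)
  then have "2 * (h - l) * (2 - h - l) \<le> (h - l) * ((2 - h) * (2 - l))"
    using assms by (metis mult.assoc mult.commute mult_left_mono diff_ge_0_iff_ge)
  then have "2 * (h - l) / ((2 - h) * (2 - l)) \<le> (h - l) / (2 - h - l)"
    using assms True by (simp add: divide_simps)
  moreover have "potential h - potential l = 2 * (h - l) / ((2 - h) * (2 - l))"
    using assms True by (simp add: potential_def divide_simps) (simp add: algebra_simps)
  ultimately show ?thesis by simp
next
  case False
  have l: "l \<le> 1/2" using assms False by linarith
  \<comment> \<open>After clearing denominators the claim is that this cubic is nonnegative.\<close>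
  have cubic: "0 \<le> 4 - 4*l + l^2 - 16*h + 15*h*l - 5*h*l^2 + 16*h^2 - 11*h^2*l"
  proof -
    have "l * l \<le> l * (1 - h)" using assms by (intro mult_left_mono) auto
    then have "l*(1-h)*(1-5*h) \<le> l*l*(1-5*h)"
      using False by (intro mult_right_mono_neg) auto
    moreover have "0 \<le> l*(1-h)*(6*h-3)" using assms False by auto
    moreover have "4 - 4*l + l^2 - 16*h + 15*h*l - 5*h*l^2 + 16*h^2 - 11*h^2*l
        = 4*(1-2*h)^2 + l*(1-h)*(6*h-3) + (l*l*(1-5*h) - l*(1-h)*(1-5*h))"
      by (simp add: algebra_simps power2_eq_square)
    ultimately show ?thesis by (smt (verit) zero_le_power2)
  qed
  have "3*((h-l)*(2-l)*(1+h) + l*(2-h-l)*(1+h) + (1-h)*(2-h-l)*(2-l)) - 2*((2-h-l)*(2-l)*(1+h))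
     = 4 - 4*l + l^2 - 16*h + 15*h*l - 5*h*l^2 + 16*h^2 - 11*h^2*l"
    by (simp add: algebra_simps power2_eq_square)
  then have "2/3 - (1-h)/(1+h) - l/(2-l) \<le> (h - l) / (2 - h - l)"
    using cubic assms by (simp add: divide_simps) (simp add: algebra_simps)
  then show ?thesis using False l by (simp add: potential_def)
qed

lemma potential_ball_le_left:
  assumes "0 \<le> x" "x \<le> 1/2" "0 < r"
  shows "potential (min (x + r) 1) - potential (max (x - r) 0) \<le> r / (1 - x)"
proof -
  consider "1 \<le> x + r" | "x + r < 1" "0 \<le> x - r" | "x + r < 1" "x - r < 0" by linarith
  then show ?thesis
  proof cases
    case 1
    then have "1 \<le> r / (1 - x)" using assms by (simp add: divide_simps)
    moreover have "potential (min (x + r) 1) \<le> 2/3" "0 \<le> potential (max (x - r) 0)"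
      using potential_bounds[of "min (x + r) 1"] potential_bounds[of "max (x - r) 0"] assms
      by auto
    ultimately show ?thesis by linarith
  next
    case 2
    have "(x + r - (x - r)) / (2 - (x + r) - (x - r)) = r / (1 - x)"
      using assms by (simp add: divide_simps)
    then show ?thesis using potential_increment_le[of "x - r" "x + r"] 2 assms by simp
  next
    case 3
    have "(x + r) * (1 - x) \<le> r * (2 - (x + r))"
      using mult_nonneg_nonneg[of "r - x" "1 - x - r"] 3 by (simp add: algebra_simps)
    then have "(x + r) / (2 - (x + r)) \<le> r / (1 - x)" using assms 3 by (simp add: divide_simps)
    then show ?thesis using potential_increment_le[of 0 "x + r"] 3 assms by simp
  qed
qed

lemma potential_ball_le:
  assumes "0 \<le> x" "x \<le> 1" "0 < r"
  shows "potential (min (x + r) 1) - potential (max (x - r) 0) \<le> r / max x (1 - x)"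
proof (cases "x \<le> 1/2")
  case True
  then show ?thesis using potential_ball_le_left[OF assms(1) True assms(3)] by (simp add: max_def)
next
  case False
  define y where "y = 1 - x"
  have y: "0 \<le> y" "y \<le> 1/2" using False assms unfolding y_def by auto
  have "min (x + r) 1 = 1 - max (y - r) 0" "max (x - r) 0 = 1 - min (y + r) 1"
       "max x (1 - x) = 1 - y"
    using False unfolding y_def by (simp_all add: min_def max_def)
  moreover have "potential (1 - max (y - r) 0) = 2/3 - potential (max (y - r) 0)"
    "potential (1 - min (y + r) 1) = 2/3 - potential (min (y + r) 1)"
    using y assms by (intro potential_reflect; simp)+
  ultimately show ?thesis using potential_ball_le_left[OF y assms(3)] by simp
qed

text \<open>Induction on the number of intervals: the interval covering the right end \<open>p\<close>
  pays for the increase of \<open>f\<close> above its left end \<open>l\<close>, and by closedness the remaining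
  intervals still cover \<open>[0, l]\<close>.\<close>
lemma mono_on_increment_le_cover_sum:
  fixes f :: "real \<Rightarrow> real" and l h w :: "'a \<Rightarrow> real"
  assumes "finite A" "mono_on {0..1} f" "0 \<le> p" "p \<le> 1"
    and "{0..p} \<subseteq> (\<Union>j\<in>A. {l j..h j})"
    and "\<And>j. j \<in> A \<Longrightarrow> f (min (h j) 1) - f (max (l j) 0) \<le> w j"
    and "\<And>j. j \<in> A \<Longrightarrow> 0 \<le> w j"
  shows "f p - f 0 \<le> sum w A"
  using assms(1,3-7)
proof (induction "card A" arbitrary: A p rule: less_induct)
  case less
  obtain j where j: "j \<in> A" "l j \<le> p" "p \<le> h j"
    using less.prems(2,4) by fastforce
  have mono: "f u \<le> f v" if "0 \<le> u" "u \<le> v" "v \<le> 1" for u v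
    using assms(2) that by (auto intro: mono_onD)
  have sum_A: "sum w A = w j + sum w (A - {j})"
    using less.prems(1) j(1) by (simp add: sum.remove)
  have step: "f p - f (max (l j) 0) \<le> w j"
    using mono[of p "min (h j) 1"] less.prems(5)[OF j(1)] less.prems(2,3) j by auto
  show ?case
  proof (cases "l j \<le> 0")
    case True
    have "0 \<le> sum w (A - {j})" using less.prems(6) by (intro sum_nonneg) auto
    then show ?thesis using step True sum_A by simp
  next
    case False
    define U where "U = (\<Union>k\<in>A - {j}. {l k..h k})"
    have "{0..<l j} \<subseteq> U"
    proof
      fix u assume u: "u \<in> {0..<l j}"
      then obtain k where "k \<in> A" "u \<in> {l k..h k}" using j less.prems(4) by fastforce
      then show "u \<in> U" using u unfolding U_def by (cases "k = j") auto
    qed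
    moreover have "closed U" unfolding U_def using less.prems(1) by (intro closed_UN) auto
    ultimately have "closure {0..<l j} \<subseteq> U" by (rule closure_minimal)
    then have "{0..l j} \<subseteq> U" using False by simp
    moreover have "card (A - {j}) < card A"
      using less.prems(1) j(1) by (meson card_Diff1_less)
    ultimately have "f (l j) - f 0 \<le> sum w (A - {j})"
      using less.hyps[of "A - {j}" "l j"] less.prems j False unfolding U_def by auto
    then show ?thesis using step sum_A False by simp
  qed
qed

lemma step_function_integral_le:
  fixes a d c T :: real
  assumes "0 \<le> c" "0 \<le> d"
  defines "g \<equiv> \<lambda>t. if t \<in> {a..a + d} then c else 0"
  shows "g integrable_on {0..T}" "integral {0..T} g \<le> c * d"
proof -
  have span: "{a..a + d} \<inter> {0..T} = {max a 0..min (a + d) T}" by auto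
  have "((\<lambda>t. c) has_integral measure lborel {max a 0..min (a + d) T} *\<^sub>R c) ({a..a + d} \<inter> {0..T})"
    unfolding span by (rule has_integral_const_real)
  then have g: "(g has_integral measure lborel {max a 0..min (a + d) T} *\<^sub>R c) {0..T}"
    unfolding g_def by (rule has_integral_restrict_Int[THEN iffD2])
  then show "g integrable_on {0..T}" by blast
  have "measure lborel {max a 0..min (a + d) T} \<le> d" using assms by auto
  from mult_left_mono[OF this assms(1)] show "integral {0..T} g \<le> c * d"
    using integral_unique[OF g] by (simp only: real_scaleR_def mult.commute)
qed

lemma rr_radius_pos: "0 < rr_radius x i"
  by (auto simp: rr_radius_def max_def)

lemma rr_radius_le_1: "0 \<le> x i \<Longrightarrow> x i \<le> 1 \<Longrightarrow> rr_radius x i \<le> 1"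
  by (simp add: rr_radius_def)

definition active_weight ::
  "(nat \<Rightarrow> real) \<Rightarrow> (nat \<Rightarrow> real) \<Rightarrow> (nat \<Rightarrow> real) \<Rightarrow> (nat \<Rightarrow> real) \<Rightarrow> nat \<Rightarrow> real \<Rightarrow> real"
where
  "active_weight x b rho tau i t =
     (if 0 < rho i \<and> tau i \<le> t \<and> t \<le> tau i + b i / rho i then rho i / rr_radius x i else 0)"

lemma active_weight_integral_le:
  assumes "0 \<le> b i" "0 \<le> rho i"
  shows "active_weight x b rho tau i integrable_on {0..T}"
    and "integral {0..T} (active_weight x b rho tau i) \<le> b i / rr_radius x i"
proof -
  define c where "c = (if 0 < rho i then rho i / rr_radius x i else 0)"
  have "active_weight x b rho tau i = (\<lambda>t. if t \<in> {tau i..tau i + b i / rho i} then c else 0)"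
    by (auto simp: active_weight_def c_def fun_eq_iff)
  moreover have "0 \<le> c" "c * (b i / rho i) \<le> b i / rr_radius x i"
    using rr_radius_pos[of x i] assms by (auto simp: c_def)
  ultimately show "active_weight x b rho tau i integrable_on {0..T}"
    "integral {0..T} (active_weight x b rho tau i) \<le> b i / rr_radius x i"
    using step_function_integral_le[where c = c and d = "b i / rho i" and a = "tau i" and T = T]
      assms by auto
qed

lemma active_weight_sum_ge:
  assumes "strip_instance n x b" "\<forall>u\<in>{0..1}. covered n x b rho tau u t"
  shows "2/3 \<le> (\<Sum>i<n. active_weight x b rho tau i t)"
proof -
  define A where "A = {i \<in> {..<n}. 0 < rho i \<and> tau i \<le> t \<and> t \<le> tau i + b i / rho i}"
  have "potential 1 - potential 0 \<le> (\<Sum>i\<in>A. rho i / rr_radius x i)"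
  proof (rule mono_on_increment_le_cover_sum[where l = "\<lambda>i. x i - rho i" and h = "\<lambda>i. x i + rho i"])
    show "mono_on {0..1} potential" by (auto intro!: mono_onI potential_mono)
    show "{0..1} \<subseteq> (\<Union>i\<in>A. {x i - rho i..x i + rho i})"
      using assms(2) unfolding covered_def A_def by fastforce
    fix i assume "i \<in> A"
    then have "0 \<le> x i" "x i \<le> 1" "0 < rho i"
      using assms(1) unfolding A_def strip_instance_def by auto
    then show "potential (min (x i + rho i) 1) - potential (max (x i - rho i) 0)
        \<le> rho i / rr_radius x i" "0 \<le> rho i / rr_radius x i"
      using potential_ball_le rr_radius_pos[of x i] by (auto simp: rr_radius_def)
  qed (auto simp: A_def)
  also have "(\<Sum>i\<in>A. rho i / rr_radius x i) = (\<Sum>i<n. active_weight x b rho tau i t)"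
    unfolding A_def active_weight_def by (simp only: sum.inter_filter[OF finite_lessThan])
  finally show ?thesis by simp
qed

lemma covers_until_le_three_halves_RR:
  assumes inst: "strip_instance n x b" and sched: "schedule n rho tau"
    and "0 \<le> T" "covers_until n x b rho tau T"
  shows "T \<le> 3/2 * RR n x b"
proof -
  have nonneg: "0 \<le> b i" "0 \<le> rho i" if "i < n" for i
    using inst sched that unfolding strip_instance_def schedule_def by auto
  note integrable = active_weight_integral_le(1)[OF nonneg]
  have "2/3 * T = integral {0..T} (\<lambda>t. 2/3)" using assms(3) by simp
  also have "\<dots> \<le> integral {0..T} (\<lambda>t. \<Sum>i<n. active_weight x b rho tau i t)"
    using assms(4) integrable
    by (intro integral_le integrable_sum active_weight_sum_ge[OF inst])
      (auto simp: covers_until_def)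
  also have "\<dots> = (\<Sum>i<n. integral {0..T} (active_weight x b rho tau i))"
    using integrable by (intro integral_sum) auto
  also have "\<dots> \<le> RR n x b"
    unfolding RR_def using active_weight_integral_le(2)[OF nonneg] by (intro sum_mono) auto
  finally show ?thesis by simp
qed

lemma RR_nonneg: "strip_instance n x b \<Longrightarrow> 0 \<le> RR n x b"
  unfolding RR_def strip_instance_def
  by (intro sum_nonneg divide_nonneg_pos) (auto simp: rr_radius_pos)

lemma lifetime_le_three_halves_RR:
  assumes "strip_instance n x b" "schedule n rho tau"
  shows "lifetime n x b rho tau \<le> 3/2 * RR n x b"
  unfolding lifetime_def
  using covers_until_le_three_halves_RR[OF assms] RR_nonneg[OF assms(1)]
  by (intro cSup_least) auto

lemma Opt_le_three_halves_RR:
  assumes "strip_instance n x b"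
  shows "Opt n x b \<le> 3/2 * RR n x b"
proof -
  have "schedule n (\<lambda>_. 0) (\<lambda>_. 0)" by (simp add: schedule_def)
  then show ?thesis
    unfolding Opt_def using lifetime_le_three_halves_RR[OF assms]
    by (intro cSup_least) auto
qed

lemma ex_consecutive_bracket:
  fixes s :: "nat \<Rightarrow> 'a::linorder"
  assumes "0 < n" "s 0 \<le> t" "t \<le> s n"
  shows "\<exists>i<n. s i \<le> t \<and> t \<le> s (Suc i)"
  using assms
proof (induction n)
  case (Suc m)
  show ?case
  proof (cases "s m \<le> t")
    case True
    then show ?thesis using Suc.prems by auto
  next
    case False
    then have "0 < m" using Suc.prems(2) by (cases m) auto
    then show ?thesis using Suc False by (metis less_SucI linorder_linear)
  qed
qed simp

lemma rr_time_0 [simp]: "rr_time x b 0 = 0"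
  and rr_time_Suc: "rr_time x b (Suc i) = rr_time x b i + b i / rr_radius x i"
  and rr_time_eq_RR: "rr_time x b n = RR n x b"
  by (simp_all add: rr_time_def RR_def)

lemma rr_schedule:
  assumes "strip_instance n x b"
  shows "schedule n (rr_radius x) (rr_time x b)"
proof -
  have "0 \<le> rr_time x b i" if "i < n" for i
    using assms that unfolding rr_time_def strip_instance_def
    by (intro sum_nonneg divide_nonneg_pos) (auto simp: rr_radius_pos)
  moreover have "0 \<le> rr_radius x i" "rr_radius x i \<le> 1" if "i < n" for i
    using assms that rr_radius_pos[of x i] rr_radius_le_1[of x i]
    unfolding strip_instance_def by auto
  ultimately show ?thesis unfolding schedule_def by auto
qed

lemma rr_covers_until_RR:
  assumes "strip_instance n x b" "0 < n"
  shows "covers_until n x b (rr_radius x) (rr_time x b) (RR n x b)"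
  unfolding covers_until_def
proof (intro ballI)
  fix u t assume u: "u \<in> {0..1::real}" and t: "t \<in> {0..RR n x b}"
  obtain i where i: "i < n" "rr_time x b i \<le> t" "t \<le> rr_time x b (Suc i)"
    using ex_consecutive_bracket[OF assms(2), of "rr_time x b" t] t rr_time_eq_RR[of x b n] by auto
  have "0 \<le> x i" "x i \<le> 1" using assms(1) i(1) unfolding strip_instance_def by auto
  then show "covered n x b (rr_radius x) (rr_time x b) u t"
    unfolding covered_def using i u rr_radius_pos[of x i]
    by (intro exI[of _ i]) (auto simp: rr_time_Suc rr_radius_def max_def)
qed

lemma rr_covers_until_le_RR:
  assumes "strip_instance n x b" "0 \<le> T" "covers_until n x b (rr_radius x) (rr_time x b) T"
  shows "T \<le> RR n x b"
proof -
  have "covered n x b (rr_radius x) (rr_time x b) 0 T"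
    using assms(2,3) unfolding covers_until_def by auto
  then obtain i where i: "i < n" "T \<le> rr_time x b (Suc i)"
    unfolding covered_def by (auto simp: rr_time_Suc)
  have "rr_time x b (Suc i) \<le> rr_time x b n"
    unfolding rr_time_def using assms(1) i(1) rr_radius_pos
    by (intro sum_mono2) (auto simp: strip_instance_def intro!: divide_nonneg_pos)
  then show ?thesis using i(2) by (simp add: rr_time_eq_RR)
qed

lemma lifetime_rr:
  assumes "strip_instance n x b"
  shows "lifetime n x b (rr_radius x) (rr_time x b) = RR n x b"
  unfolding lifetime_def
proof (rule cSup_eq_maximum)
  show "RR n x b \<in> insert 0 {T. 0 \<le> T \<and> covers_until n x b (rr_radius x) (rr_time x b) T}"
  proof (cases "n = 0")
    case True
    then show ?thesis by (simp add: RR_def)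
  next
    case False
    then show ?thesis using rr_covers_until_RR[OF assms] RR_nonneg[OF assms] by auto
  qed
qed (use rr_covers_until_le_RR[OF assms] RR_nonneg[OF assms] in auto)

theorem theorem2:
  fixes n :: nat and x b :: "nat \<Rightarrow> real"
  assumes "strip_instance n x b"
  shows "schedule n (rr_radius x) (rr_time x b)
       \<and> lifetime n x b (rr_radius x) (rr_time x b) = RR n x b
       \<and> RR n x b \<ge> 2 / 3 * Opt n x b"
  using rr_schedule[OF assms] lifetime_rr[OF assms] Opt_le_three_halves_RR[OF assms] by simp

end
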